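(* Let $0\le b\le1$, $M>0$ and $0\le\alpha<1$, and let $r_0=r_0(\alpha)$ be the real root in $(0,1)$ of the equation \[\big((1-\alpha)(1+M)-2(2-\alpha)(2b-M)r\big)(1-r)^3=M\big(1-\alpha+(1+\alpha)r\big).\] Let $\mathcal{F}$ be the class of functions $f\in\mathcal{A}_b$, $f(z)=z+\sum_{n\ge2}a_nz^n$, with $|a_n|\le M$ for all $n\ge3$. Then: (i) every $f\in\mathcal{F}$ satisfies $\left|\frac{zf''(z)}{f'(z)}\right|\le1-\alpha$ for $|z|\le r_0$; (ii) $r_0(\alpha)$ is the radius of convexity of order $\alpha$ of $\mathcal{F}$; (iii) $r_0(1/2)$ is the radius of uniform convexity of $\mathcal{F}$. All results are sharp, with extremal function $f_0(z)=z-2bz^2-\frac{Mz^3}{1-z}$.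
   Context: $\mathbb{D}=\{z\in\mathbb{C}:|z|<1\}$. For $0\le b\le1$, $\mathcal{A}_b$ is the class of analytic functions $f$ on $\mathbb{D}$ of the form $f(z)=z+a_2z^2+a_3z^3+\cdots$ with $|a_2|=2b$. For a class $\mathcal{F}$ of analytic functions on $\mathbb{D}$ normalized by $f(0)=0$, $f'(0)=1$, and $0\le\alpha<1$, the radius of convexity of order $\alpha$ of $\mathcal{F}$ is the supremum of $r\in(0,1]$ such that every $f\in\mathcal{F}$ satisfies $f'(z)\ne0$ and $\operatorname{Re}\big(1+zf''(z)/f'(z)\big)>\alpha$ for $|z|<r$. The radius of uniform convexity of $\mathcal{F}$ is the supremum of $r\in(0,1]$ such that every $f\in\mathcal{F}$ satisfies $f'(z)\ne0$ and $\operatorname{Re}\big(1+zf''(z)/f'(z)\big)>\left|zf''(z)/f'(z)\right|$ for $|z|<r$. *)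

theory Defs
  imports "HOL-Analysis.Analysis"
begin

definition taylor_coeff :: "(complex \<Rightarrow> complex) \<Rightarrow> nat \<Rightarrow> complex" where
  "taylor_coeff f n = (deriv ^^ n) f 0 / of_nat (fact n)"

definition class_A :: "real \<Rightarrow> (complex \<Rightarrow> complex) set" where
  "class_A b = {f. f holomorphic_on ball 0 1 \<and> f 0 = 0 \<and> deriv f 0 = 1
                  \<and> norm (taylor_coeff f 2) = 2 * b}"

definition class_F :: "real \<Rightarrow> real \<Rightarrow> (complex \<Rightarrow> complex) set" where
  "class_F b M = {f \<in> class_A b. \<forall>n\<ge>3. norm (taylor_coeff f n) \<le> M}"

definition radius_convexity_order :: "(complex \<Rightarrow> complex) set \<Rightarrow> real \<Rightarrow> real" where
  "radius_convexity_order F \<alpha> =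
     Sup {r \<in> {0<..1}. \<forall>f\<in>F. \<forall>z. norm z < r \<longrightarrow>
            deriv f z \<noteq> 0 \<and> Re (1 + z * deriv (deriv f) z / deriv f z) > \<alpha>}"

definition radius_uniform_convexity :: "(complex \<Rightarrow> complex) set \<Rightarrow> real" where
  "radius_uniform_convexity F =
     Sup {r \<in> {0<..1}. \<forall>f\<in>F. \<forall>z. norm z < r \<longrightarrow>
            deriv f z \<noteq> 0 \<and>
            Re (1 + z * deriv (deriv f) z / deriv f z) > norm (z * deriv (deriv f) z / deriv f z)}"

end

theory Submission
  imports Defs "HOL-Complex_Analysis.Complex_Analysis"
begin

text \<open>
  For \<open>f \<in> class_F b M\<close> and \<open>|z| = r < 1\<close> the coefficient bounds give
  \<open>|f'(z)| \<ge> D(r)\<close> and \<open>|z f''(z)| \<le> N(r)\<close>, where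
  \<open>D(r) = 1 - 4br - M (sum over n \<ge> 3 of n r^(n-1))\<close> and
  \<open>N(r) = 4br + M (sum over n \<ge> 3 of n (n-1) r^(n-1))\<close>
  (\<open>deriv_min b M r\<close> and \<open>zderiv2_max b M r\<close>); both bounds are attained
  by \<open>f\<^sub>0\<close> at \<open>z = r\<close>, where \<open>z f''/f' = -N(r)/D(r)\<close>.
  The gap \<open>N - (1 - \<beta>) D\<close> is strictly increasing on \<open>[0,1)\<close>, and multiplied by
  \<open>(1 - r)^3\<close> it is the difference of the two sides of the equation defining \<open>r\<^sub>0\<close>,
  so it changes sign exactly at \<open>r\<^sub>0\<close>. Hence any condition on \<open>w = z f''/f'\<close> that
  holds for \<open>|w| < 1 - \<beta>\<close> and fails at \<open>w = -x\<close> for \<open>x \<ge> 1 - \<beta>\<close> has radius exactly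
  \<open>r\<^sub>0\<close>: convexity of order \<open>\<alpha>\<close> is \<open>Re (1 + w) > \<alpha>\<close> with \<open>\<beta> = \<alpha>\<close>, and uniform
  convexity is \<open>Re (1 + w) > |w|\<close> with \<open>\<beta> = 1/2\<close>.
\<close>

lemma taylor_coeff_sums:
  assumes "f holomorphic_on ball 0 1" "norm z < 1"
  shows "(\<lambda>n. taylor_coeff f n * z ^ n) sums f z"
  using holomorphic_power_series[of f 0 1 z] assms by (simp add: taylor_coeff_def)

lemma taylor_coeff_deriv:
  "taylor_coeff (deriv f) n = of_nat (Suc n) * taylor_coeff f (Suc n)"
proof -
  have "(deriv ^^ n) (deriv f) = (deriv ^^ Suc n) f"
    by (simp add: funpow_Suc_right del: funpow.simps)
  moreover have "(fact (Suc n) :: complex) = of_nat (Suc n) * fact n"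
    by (rule fact_Suc)
  ultimately show ?thesis
    unfolding taylor_coeff_def by (simp del: funpow.simps of_nat_Suc fact_Suc)
qed

lemma deriv_taylor_sums:
  assumes "f holomorphic_on ball 0 1" "norm z < 1"
  shows "(\<lambda>n. of_nat (Suc n) * taylor_coeff f (Suc n) * z ^ n) sums deriv f z"
  using taylor_coeff_sums[OF holomorphic_deriv[OF assms(1)] assms(2)]
  by (simp add: taylor_coeff_deriv)

lemma deriv2_taylor_sums:
  assumes "f holomorphic_on ball 0 1" "norm z < 1"
  shows "(\<lambda>n. of_nat (Suc n) * of_nat (Suc (Suc n)) * taylor_coeff f (Suc (Suc n)) * z ^ n)
           sums deriv (deriv f) z"
  using taylor_coeff_sums[OF holomorphic_deriv[OF holomorphic_deriv[OF assms(1)]] assms(2)]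
  by (simp add: taylor_coeff_deriv mult.assoc)

lemma geometric_deriv2_sums:
  fixes z :: "'a :: {real_normed_field,banach}"
  assumes "norm z < 1"
  shows "(\<lambda>n. of_nat (Suc n) * of_nat (Suc (Suc n)) * z ^ n) sums (2 / (1 - z) ^ 3)"
proof -
  have "(\<lambda>n. diffs (\<lambda>n. of_nat (Suc n)) n * z ^ n) sums (2 / (1 - z) ^ 3)"
  proof (rule termdiffs_sums_strong)
    fix z :: 'a assume "norm z < 1"
    then show "(\<lambda>n. of_nat (Suc n) * z ^ n) sums (1 / (1 - z) ^ 2)"
      by (rule geometric_deriv_sums)
  next
    have "1 - z \<noteq> 0" using assms by auto
    then show "((\<lambda>z. 1 / (1 - z) ^ 2) has_field_derivative 2 / (1 - z) ^ 3) (at z)"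
      by (auto intro!: derivative_eq_intros simp: divide_simps) (simp add: eval_nat_numeral algebra_simps)
  qed (use assms in auto)
  then show ?thesis unfolding diffs_def by (simp add: mult.assoc)
qed

definition deriv_tail :: "'a::real_normed_field \<Rightarrow> 'a" where
  "deriv_tail z = 1 / (1 - z) ^ 2 - 1 - 2 * z"

definition zderiv2_tail :: "'a::real_normed_field \<Rightarrow> 'a" where
  "zderiv2_tail z = z * (2 / (1 - z) ^ 3 - 2)"

lemma deriv_tail_sums:
  fixes z :: "'a :: {real_normed_field,banach}"
  assumes "norm z < 1"
  shows "(\<lambda>i. of_nat (i + 3) * z ^ (i + 2)) sums deriv_tail z"
proof -
  have "(\<lambda>i. of_nat (Suc (i + 2)) * z ^ (i + 2)) sums deriv_tail z"
    using geometric_deriv_sums[OF assms]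
    by (subst sums_iff_shift) (simp add: deriv_tail_def eval_nat_numeral)
  then show ?thesis
    by (simp add: numeral_3_eq_3)
qed

lemma zderiv2_tail_sums:
  fixes z :: "'a :: {real_normed_field,banach}"
  assumes "norm z < 1"
  shows "(\<lambda>i. of_nat ((i + 2) * (i + 3)) * z ^ (i + 2)) sums zderiv2_tail z"
proof -
  have "(\<lambda>i. of_nat (Suc (i + 1)) * of_nat (Suc (Suc (i + 1))) * z ^ (i + 1))
          sums (2 / (1 - z) ^ 3 - 2)"
    using geometric_deriv2_sums[OF assms] by (subst sums_iff_shift) simp
  from sums_mult[OF this, of z] show ?thesis
    by (simp add: zderiv2_tail_def algebra_simps)
qed

lemma deriv_taylor_tail_sums:
  assumes "f holomorphic_on ball 0 1" "norm z < 1"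
  shows "(\<lambda>i. of_nat (i + 3) * taylor_coeff f (i + 3) * z ^ (i + 2))
           sums (deriv f z - taylor_coeff f 1 - 2 * taylor_coeff f 2 * z)"
proof -
  have "(\<lambda>i. of_nat (Suc (i + 2)) * taylor_coeff f (Suc (i + 2)) * z ^ (i + 2))
          sums (deriv f z - taylor_coeff f 1 - 2 * taylor_coeff f 2 * z)"
    using deriv_taylor_sums[OF assms] by (subst sums_iff_shift) (simp add: eval_nat_numeral)
  then show ?thesis by (simp add: numeral_3_eq_3)
qed

lemma zderiv2_taylor_tail_sums:
  assumes "f holomorphic_on ball 0 1" "norm z < 1"
  shows "(\<lambda>i. of_nat ((i + 2) * (i + 3)) * taylor_coeff f (i + 3) * z ^ (i + 2))
           sums (z * deriv (deriv f) z - 2 * taylor_coeff f 2 * z)"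
proof -
  have "(\<lambda>i. of_nat (Suc (i + 1)) * of_nat (Suc (Suc (i + 1)))
            * taylor_coeff f (Suc (Suc (i + 1))) * z ^ (i + 1))
          sums (deriv (deriv f) z - 2 * taylor_coeff f 2)"
    using deriv2_taylor_sums[OF assms] by (subst sums_iff_shift) (simp add: numeral_2_eq_2)
  from sums_mult[OF this, of z] show ?thesis
    by (simp add: numeral_3_eq_3 algebra_simps)
qed

lemma norm_sums_le_majorant:
  fixes a :: "nat \<Rightarrow> 'a::{real_normed_field,banach}" and w :: "nat \<Rightarrow> nat"
  assumes s: "(\<lambda>i. of_nat (w i) * a i * z ^ (i + 2)) sums s"
    and t: "(\<lambda>i. of_nat (w i) * norm z ^ (i + 2)) sums t"
    and a: "\<And>i. norm (a i) \<le> M"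
  shows "norm s \<le> M * t"
proof -
  have Mt: "(\<lambda>i. M * (of_nat (w i) * norm z ^ (i + 2))) sums (M * t)"
    using t by (rule sums_mult)
  have "norm (of_nat (w i) * a i * z ^ (i + 2)) \<le> M * (of_nat (w i) * norm z ^ (i + 2))" for i
    using mult_right_mono[OF a[of i], of "of_nat (w i) * norm z ^ (i + 2)"]
    by (simp add: norm_mult norm_power mult_ac)
  from norm_suminf_le[OF this sums_summable[OF Mt]] show ?thesis
    using s Mt by (simp add: sums_iff)
qed

definition deriv_min :: "real \<Rightarrow> real \<Rightarrow> real \<Rightarrow> real" where
  "deriv_min b M r = 1 - 4 * b * r - M * deriv_tail r"

definition zderiv2_max :: "real \<Rightarrow> real \<Rightarrow> real \<Rightarrow> real" where
  "zderiv2_max b M r = 4 * b * r + M * zderiv2_tail r"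

lemma class_FD:
  assumes "f \<in> class_F b M"
  shows "f holomorphic_on ball 0 1" "taylor_coeff f 1 = 1" "norm (taylor_coeff f 2) = 2 * b"
    and "\<And>n. n \<ge> 3 \<Longrightarrow> norm (taylor_coeff f n) \<le> M"
  using assms by (auto simp: class_F_def class_A_def taylor_coeff_def)

lemma class_F_norm_deriv_ge:
  assumes f: "f \<in> class_F b M" and z: "norm z < 1"
  shows "deriv_min b M (norm z) \<le> norm (deriv f z)"
proof -
  note a = class_FD[OF f]
  have "norm (deriv f z - 1 - 2 * taylor_coeff f 2 * z) \<le> M * deriv_tail (norm z)"
  proof (rule norm_sums_le_majorant[where w="\<lambda>i. i + 3"])
    show "(\<lambda>i. of_nat (i + 3) * taylor_coeff f (i + 3) * z ^ (i + 2))
        sums (deriv f z - 1 - 2 * taylor_coeff f 2 * z)"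
      using deriv_taylor_tail_sums[OF a(1) z] by (simp only: a(2))
    show "(\<lambda>i. of_nat (i + 3) * norm z ^ (i + 2)) sums deriv_tail (norm z)"
      using z by (intro deriv_tail_sums) simp
  qed (simp add: a(4))
  moreover have "norm (2 * taylor_coeff f 2 * z) = 4 * b * norm z"
    by (simp add: norm_mult a(3))
  moreover have "1 - norm (2 * taylor_coeff f 2 * z) \<le> norm (1 + 2 * taylor_coeff f 2 * z)"
    by (metis norm_one norm_diff_ineq)
  moreover have "norm (1 + 2 * taylor_coeff f 2 * z)
      \<le> norm (deriv f z) + norm (deriv f z - 1 - 2 * taylor_coeff f 2 * z)"
    using norm_triangle_ineq4[of "deriv f z" "deriv f z - 1 - 2 * taylor_coeff f 2 * z"]
    by (simp add: algebra_simps)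
  ultimately show ?thesis by (simp add: deriv_min_def)
qed

lemma class_F_norm_zderiv2_le:
  assumes f: "f \<in> class_F b M" and z: "norm z < 1"
  shows "norm (z * deriv (deriv f) z) \<le> zderiv2_max b M (norm z)"
proof -
  note a = class_FD[OF f]
  have "norm (z * deriv (deriv f) z - 2 * taylor_coeff f 2 * z) \<le> M * zderiv2_tail (norm z)"
  proof (rule norm_sums_le_majorant[where w="\<lambda>i. (i + 2) * (i + 3)"])
    show "(\<lambda>i. of_nat ((i + 2) * (i + 3)) * norm z ^ (i + 2)) sums zderiv2_tail (norm z)"
      using z by (intro zderiv2_tail_sums) simp
  qed (use zderiv2_taylor_tail_sums[OF a(1) z] a(4) in auto)
  moreover have "norm (2 * taylor_coeff f 2 * z) = 4 * b * norm z"
    by (simp add: norm_mult a(3))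
  moreover have "norm (z * deriv (deriv f) z)
      \<le> norm (2 * taylor_coeff f 2 * z) + norm (z * deriv (deriv f) z - 2 * taylor_coeff f 2 * z)"
    by (rule norm_triangle_sub)
  ultimately show ?thesis by (simp add: zderiv2_max_def)
qed

lemma class_F_norm_ratio_le:
  assumes f: "f \<in> class_F b M" and z: "norm z < 1" and pos: "0 < deriv_min b M (norm z)"
  shows "deriv f z \<noteq> 0"
    and "norm (z * deriv (deriv f) z / deriv f z) \<le> zderiv2_max b M (norm z) / deriv_min b M (norm z)"
proof -
  note lower = class_F_norm_deriv_ge[OF f z] and upper = class_F_norm_zderiv2_le[OF f z]
  show "deriv f z \<noteq> 0" using lower pos by auto
  show "norm (z * deriv (deriv f) z / deriv f z) \<le> zderiv2_max b M (norm z) / deriv_min b M (norm z)"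
    unfolding norm_divide using lower upper pos by (intro frac_le) (auto intro: order.trans[OF norm_ge_zero])
qed

lemma sums_strict_mono_nonneg_coeffs:
  fixes c :: "nat \<Rightarrow> real"
  assumes A: "(\<lambda>i. c i * s ^ (i + k)) sums A" and B: "(\<lambda>i. c i * t ^ (i + k)) sums B"
    and c: "\<And>i. 0 \<le> c i" "0 < c 0" and k: "0 < k" and st: "0 \<le> s" "s < t"
  shows "A < B"
proof -
  have diff: "(\<lambda>i. c i * t ^ (i + k) - c i * s ^ (i + k)) sums (B - A)"
    using B A by (rule sums_diff)
  have "0 \<le> c i * t ^ (i + k) - c i * s ^ (i + k)" for i
    using st c(1)[of i] by (simp add: mult_left_mono power_mono)
  moreover have "0 < c 0 * t ^ (0 + k) - c 0 * s ^ (0 + k)"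
    using st c(2) k by (simp add: power_strict_mono)
  ultimately have "0 < B - A"
    using suminf_pos_iff[OF sums_summable[OF diff]] sums_unique[OF diff] by (metis add_0)
  then show ?thesis by simp
qed

lemma deriv_tail_strict_mono:
  fixes s t :: real
  assumes "0 \<le> s" "s < t" "t < 1"
  shows "deriv_tail s < deriv_tail t"
  using assms by (intro sums_strict_mono_nonneg_coeffs[OF deriv_tail_sums deriv_tail_sums]) auto

lemma zderiv2_tail_strict_mono:
  fixes s t :: real
  assumes "0 \<le> s" "s < t" "t < 1"
  shows "zderiv2_tail s < zderiv2_tail t"
  using assms by (intro sums_strict_mono_nonneg_coeffs[OF zderiv2_tail_sums zderiv2_tail_sums]) auto

definition convexity_gap :: "real \<Rightarrow> real \<Rightarrow> real \<Rightarrow> real \<Rightarrow> real" where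
  "convexity_gap b M \<beta> r = zderiv2_max b M r - (1 - \<beta>) * deriv_min b M r"

lemma convexity_gap_strict_mono:
  assumes "0 \<le> b" "0 < M" "\<beta> < 1" "0 \<le> s" "s < t" "t < 1"
  shows "convexity_gap b M \<beta> s < convexity_gap b M \<beta> t"
proof -
  have "M * zderiv2_tail s < M * zderiv2_tail t"
    using assms zderiv2_tail_strict_mono by simp
  moreover have "(1 - \<beta>) * M * deriv_tail s \<le> (1 - \<beta>) * M * deriv_tail t"
    using assms deriv_tail_strict_mono[of s t] by (intro mult_left_mono) auto
  moreover have "(2 - \<beta>) * 4 * b * s \<le> (2 - \<beta>) * 4 * b * t"
    using assms by (intro mult_left_mono) auto
  ultimately show ?thesis
    by (simp add: convexity_gap_def zderiv2_max_def deriv_min_def algebra_simps)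
qed

lemma cube_mult_convexity_gap:
  assumes "r < 1"
  shows "(1 - r) ^ 3 * convexity_gap b M \<beta> r
    = M * (1 - \<beta> + (1 + \<beta>) * r)
      - ((1 - \<beta>) * (1 + M) - 2 * (2 - \<beta>) * (2 * b - M) * r) * (1 - r) ^ 3"
  using assms
  by (simp add: convexity_gap_def zderiv2_max_def deriv_min_def deriv_tail_def zderiv2_tail_def
      field_simps) (simp add: eval_nat_numeral algebra_simps)

definition extremal_fun :: "real \<Rightarrow> real \<Rightarrow> complex \<Rightarrow> complex" where
  "extremal_fun b M z = z - 2 * of_real b * z ^ 2 - of_real M * z ^ 3 / (1 - z)"

definition extremal_coeff :: "real \<Rightarrow> real \<Rightarrow> nat \<Rightarrow> complex" where
  "extremal_coeff b M n =
     (if n = 1 then 1 else if n = 2 then - 2 * of_real b else if n \<ge> 3 then - of_real M else 0)"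

lemma extremal_fun_sums:
  assumes "norm z < 1"
  shows "(\<lambda>n. extremal_coeff b M n * z ^ n) sums extremal_fun b M z"
proof -
  have "(\<lambda>i. (- of_real M * z ^ 3) * z ^ i) sums ((- of_real M * z ^ 3) * (1 / (1 - z)))"
    using geometric_sums[OF assms] by (intro sums_mult) simp
  then have "(\<lambda>i. extremal_coeff b M (i + 3) * z ^ (i + 3)) sums (- of_real M * z ^ 3 / (1 - z))"
    by (simp add: extremal_coeff_def power_add algebra_simps)
  then have "(\<lambda>n. extremal_coeff b M n * z ^ n)
      sums (- of_real M * z ^ 3 / (1 - z) + (\<Sum>i<3. extremal_coeff b M i * z ^ i))"
    by (subst (asm) sums_iff_shift)
  then show ?thesis
    by (simp add: extremal_fun_def extremal_coeff_def eval_nat_numeral algebra_simps)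
qed

lemma extremal_fun_has_fps_expansion:
  "extremal_fun b M has_fps_expansion Abs_fps (extremal_coeff b M)"
proof -
  have "summable (\<lambda>n. extremal_coeff b M n * (1 / 2) ^ n)"
    using extremal_fun_sums[of "1 / 2"] by (auto intro: sums_summable)
  then have "norm (1 / 2 :: complex) \<le> conv_radius (extremal_coeff b M)"
    by (rule conv_radius_geI)
  then have "0 < fps_conv_radius (Abs_fps (extremal_coeff b M))"
    unfolding fps_conv_radius_def by (auto elim!: less_le_trans[rotated])
  moreover have "\<forall>\<^sub>F z in nhds 0. eval_fps (Abs_fps (extremal_coeff b M)) z = extremal_fun b M z"
    using eventually_nhds_in_open[of "ball 0 1" 0]
    by (rule eventually_mono) (auto simp: eval_fps_def extremal_fun_sums sums_unique[symmetric])
  ultimately show ?thesis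
    unfolding has_fps_expansion_def by simp
qed

lemma taylor_coeff_extremal_fun: "taylor_coeff (extremal_fun b M) n = extremal_coeff b M n"
  using fps_nth_fps_expansion[OF extremal_fun_has_fps_expansion, of b M n]
  by (simp add: taylor_coeff_def)

lemma holomorphic_extremal_fun: "extremal_fun b M holomorphic_on ball 0 1"
  unfolding extremal_fun_def by (auto intro!: holomorphic_intros)

lemma extremal_fun_in_class_F:
  assumes "0 \<le> b" "0 < M"
  shows "extremal_fun b M \<in> class_F b M"
proof -
  have "deriv (extremal_fun b M) 0 = 1"
    using taylor_coeff_extremal_fun[of b M 1] by (simp add: taylor_coeff_def extremal_coeff_def)
  then show ?thesis
    using assms holomorphic_extremal_fun
    by (simp add: class_F_def class_A_def taylor_coeff_extremal_fun extremal_coeff_def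
        extremal_fun_def norm_mult)
qed

lemma deriv_extremal_fun:
  assumes "norm z < 1"
  shows "deriv (extremal_fun b M) z = 1 - 4 * of_real b * z - of_real M * deriv_tail z"
proof -
  have "(\<lambda>i. - of_real M * (of_nat (i + 3) * z ^ (i + 2))) sums (- of_real M * deriv_tail z)"
    using deriv_tail_sums[OF assms] by (rule sums_mult)
  moreover have "(\<lambda>i. - of_real M * (of_nat (i + 3) * z ^ (i + 2)))
      sums (deriv (extremal_fun b M) z - 1 - 2 * (- 2 * of_real b) * z)"
    using deriv_taylor_tail_sums[OF holomorphic_extremal_fun assms]
    by (simp add: taylor_coeff_extremal_fun extremal_coeff_def mult_ac)
  ultimately have "- of_real M * deriv_tail z = deriv (extremal_fun b M) z - 1 - 2 * (- 2 * of_real b) * z"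
    by (rule sums_unique2)
  then show ?thesis
    by algebra
qed

lemma zderiv2_extremal_fun:
  assumes "norm z < 1"
  shows "z * deriv (deriv (extremal_fun b M)) z = - 4 * of_real b * z - of_real M * zderiv2_tail z"
proof -
  have "(\<lambda>i. - of_real M * (of_nat ((i + 2) * (i + 3)) * z ^ (i + 2))) sums (- of_real M * zderiv2_tail z)"
    using zderiv2_tail_sums[OF assms] by (rule sums_mult)
  moreover have "(\<lambda>i. - of_real M * (of_nat ((i + 2) * (i + 3)) * z ^ (i + 2)))
      sums (z * deriv (deriv (extremal_fun b M)) z - 2 * (- 2 * of_real b) * z)"
    using zderiv2_taylor_tail_sums[OF holomorphic_extremal_fun assms]
    by (simp add: taylor_coeff_extremal_fun extremal_coeff_def mult_ac)
  ultimately have "- of_real M * zderiv2_tail z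
      = z * deriv (deriv (extremal_fun b M)) z - 2 * (- 2 * of_real b) * z"
    by (rule sums_unique2)
  then show ?thesis
    by algebra
qed

lemma extremal_fun_ratio_of_real:
  assumes "0 \<le> t" "t < 1"
  shows "deriv (extremal_fun b M) (of_real t) = of_real (deriv_min b M t)"
    and "of_real t * deriv (deriv (extremal_fun b M)) (of_real t) / deriv (extremal_fun b M) (of_real t)
           = - of_real (zderiv2_max b M t / deriv_min b M t)"
proof -
  show D: "deriv (extremal_fun b M) (of_real t) = of_real (deriv_min b M t)"
    using deriv_extremal_fun[of "of_real t"] assms
    by (simp add: deriv_min_def deriv_tail_def)
  have "of_real t * deriv (deriv (extremal_fun b M)) (of_real t) = - of_real (zderiv2_max b M t)"
    using zderiv2_extremal_fun[of "of_real t"] assms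
    by (simp add: zderiv2_max_def zderiv2_tail_def)
  with D show "of_real t * deriv (deriv (extremal_fun b M)) (of_real t) / deriv (extremal_fun b M) (of_real t)
           = - of_real (zderiv2_max b M t / deriv_min b M t)"
    by simp
qed

locale convexity_radius =
  fixes b M \<beta> r0 :: real
  assumes b: "0 \<le> b" and M: "0 < M" and \<beta>: "\<beta> < 1" and r0: "0 < r0" "r0 < 1"
    and root: "((1 - \<beta>) * (1 + M) - 2 * (2 - \<beta>) * (2 * b - M) * r0) * (1 - r0) ^ 3
                 = M * (1 - \<beta> + (1 + \<beta>) * r0)"
begin

lemma convexity_gap_root: "convexity_gap b M \<beta> r0 = 0"
  using cube_mult_convexity_gap[of r0 b M \<beta>] r0 root by simp

lemma convexity_gap_neg: "0 \<le> r \<Longrightarrow> r < r0 \<Longrightarrow> convexity_gap b M \<beta> r < 0"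
  using convexity_gap_strict_mono[OF b M \<beta>, of r r0] convexity_gap_root r0 by simp

lemma convexity_gap_pos: "r0 < r \<Longrightarrow> r < 1 \<Longrightarrow> 0 < convexity_gap b M \<beta> r"
  using convexity_gap_strict_mono[OF b M \<beta>, of r0 r] convexity_gap_root r0 by simp

lemma convexity_gap_nonpos: "0 \<le> r \<Longrightarrow> r \<le> r0 \<Longrightarrow> convexity_gap b M \<beta> r \<le> 0"
  using convexity_gap_neg[of r] convexity_gap_root by (cases "r = r0") auto

lemma deriv_min_pos:
  assumes "0 \<le> r" "r \<le> r0"
  shows "0 < deriv_min b M r"
proof (cases "r = 0")
  case True
  then show ?thesis by (simp add: deriv_min_def deriv_tail_def)
next
  case False
  then have "zderiv2_tail 0 < zderiv2_tail r"
    using assms r0 by (intro zderiv2_tail_strict_mono) auto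
  then have "0 < zderiv2_max b M r"
    using assms b M by (simp add: zderiv2_max_def zderiv2_tail_def add_nonneg_pos)
  moreover have "zderiv2_max b M r \<le> (1 - \<beta>) * deriv_min b M r"
    using convexity_gap_nonpos[OF assms] by (simp add: convexity_gap_def)
  ultimately have "0 < (1 - \<beta>) * deriv_min b M r" by linarith
  then show ?thesis
    using \<beta> by (simp add: zero_less_mult_iff)
qed

lemma class_F_ratio_bound:
  assumes f: "f \<in> class_F b M" and z: "norm z \<le> r0"
  shows "deriv f z \<noteq> 0"
    and "norm (z * deriv (deriv f) z / deriv f z) \<le> 1 - \<beta>"
    and "norm z < r0 \<Longrightarrow> norm (z * deriv (deriv f) z / deriv f z) < 1 - \<beta>"
proof -
  have pos: "0 < deriv_min b M (norm z)"
    using z by (intro deriv_min_pos) auto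
  note bound = class_F_norm_ratio_le[OF f _ pos]
  show "deriv f z \<noteq> 0" using bound(1) z r0 by simp
  have ratio: "zderiv2_max b M (norm z) / deriv_min b M (norm z) - (1 - \<beta>)
      = convexity_gap b M \<beta> (norm z) / deriv_min b M (norm z)"
    using pos by (simp add: convexity_gap_def field_simps)
  show "norm (z * deriv (deriv f) z / deriv f z) \<le> 1 - \<beta>"
    using bound(2) z r0 convexity_gap_nonpos[of "norm z"] ratio pos
    by (smt (verit) divide_nonpos_pos norm_ge_zero)
  show "norm (z * deriv (deriv f) z / deriv f z) < 1 - \<beta>" if "norm z < r0"
    using bound(2) that r0 convexity_gap_neg[of "norm z"] ratio pos
    by (smt (verit) divide_neg_pos norm_ge_zero)
qed

lemma extremal_fun_ratio_at_root:
  "norm (of_real r0 * deriv (deriv (extremal_fun b M)) (of_real r0) / deriv (extremal_fun b M) (of_real r0))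
     = 1 - \<beta>"
proof -
  have pos: "0 < deriv_min b M r0"
    using r0 by (intro deriv_min_pos) auto
  have "zderiv2_max b M r0 = (1 - \<beta>) * deriv_min b M r0"
    using convexity_gap_root by (simp add: convexity_gap_def)
  then have "of_real r0 * deriv (deriv (extremal_fun b M)) (of_real r0) / deriv (extremal_fun b M) (of_real r0)
      = - of_real (1 - \<beta>)"
    using extremal_fun_ratio_of_real(2)[of r0] r0 pos by simp
  then show ?thesis
    using \<beta> by (simp only: norm_minus_cancel norm_of_real)
qed

lemma deriv_min_pos_right_of_root:
  assumes "r0 < r"
  obtains t where "r0 < t" "t < r" "t < 1" "0 < deriv_min b M t"
proof -
  have "isCont (deriv_min b M) r0"
    using r0 unfolding deriv_min_def deriv_tail_def by (intro continuous_intros) auto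
  then have "(deriv_min b M \<longlongrightarrow> deriv_min b M r0) (at_right r0)"
    by (simp add: isCont_def filterlim_at_split)
  then have "\<forall>\<^sub>F t in at_right r0. 0 < deriv_min b M t"
    using deriv_min_pos[of r0] r0 by (intro order_tendstoD) auto
  moreover have "\<forall>\<^sub>F t in at_right r0. r0 < t \<and> t < min r 1"
    unfolding eventually_at_right_field using assms r0 by (intro exI[of _ "min r 1"]) auto
  ultimately obtain t where "0 < deriv_min b M t" "r0 < t" "t < min r 1"
    using eventually_happens'[OF trivial_limit_at_right_real eventually_conj] by blast
  then show ?thesis using that by simp
qed

lemma radius_class_F:
  assumes sufficient: "\<And>w. norm w < 1 - \<beta> \<Longrightarrow> P w"
    and necessary: "\<And>x. 0 \<le> x \<Longrightarrow> P (- of_real x) \<Longrightarrow> x < 1 - \<beta>"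
  shows "Sup {r \<in> {0<..1}. \<forall>f\<in>class_F b M. \<forall>z. norm z < r \<longrightarrow>
                deriv f z \<noteq> 0 \<and> P (z * deriv (deriv f) z / deriv f z)} = r0"
proof (rule cSup_eq_maximum)
  show "r0 \<in> {r \<in> {0<..1}. \<forall>f\<in>class_F b M. \<forall>z. norm z < r \<longrightarrow>
                deriv f z \<noteq> 0 \<and> P (z * deriv (deriv f) z / deriv f z)}"
  proof (intro CollectI conjI ballI allI impI)
    fix f :: "complex \<Rightarrow> complex" and z :: complex
    assume f: "f \<in> class_F b M" and z: "norm z < r0"
    show "deriv f z \<noteq> 0"
      using class_F_ratio_bound(1)[OF f] z by simp
    show "P (z * deriv (deriv f) z / deriv f z)"
      using sufficient class_F_ratio_bound(3)[OF f] z by simp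
  qed (use r0 in simp)
next
  fix r
  assume "r \<in> {r \<in> {0<..1}. \<forall>f\<in>class_F b M. \<forall>z. norm z < r \<longrightarrow>
                deriv f z \<noteq> 0 \<and> P (z * deriv (deriv f) z / deriv f z)}"
  then have extremal: "P (z * deriv (deriv (extremal_fun b M)) z / deriv (extremal_fun b M) z)"
    if "norm z < r" for z
    using that extremal_fun_in_class_F[OF b M] by blast
  show "r \<le> r0"
  proof (rule ccontr)
    assume "\<not> r \<le> r0"
    then have "r0 < r" by simp
    then obtain t where t: "r0 < t" "t < r" "t < 1" and pos: "0 < deriv_min b M t"
      by (rule deriv_min_pos_right_of_root)
    have "0 \<le> zderiv2_max b M t"
      using t r0 b M zderiv2_tail_strict_mono[of 0 t]
      by (simp add: zderiv2_max_def zderiv2_tail_def)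
    then have "zderiv2_max b M t / deriv_min b M t < 1 - \<beta>"
      using extremal[of "of_real t"] extremal_fun_ratio_of_real(2)[of t] t r0 pos
      by (intro necessary) auto
    then have "convexity_gap b M \<beta> t < 0"
      using pos by (simp add: convexity_gap_def field_simps)
    then show False
      using convexity_gap_pos[OF t(1,3)] by simp
  qed
qed

end

lemma Re_one_plus_ge: "1 - norm w \<le> Re (1 + w)"
  using abs_Re_le_cmod[of w] by simp

theorem theorem3p6:
  fixes b M \<alpha> r0 r1 :: real
  assumes hb: "0 \<le> b" "b \<le> 1"
    and hM: "M > 0"
    and h\<alpha>: "0 \<le> \<alpha>" "\<alpha> < 1"
    and hr0: "0 < r0" "r0 < 1"
    and hr0eq: "((1 - \<alpha>) * (1 + M) - 2 * (2 - \<alpha>) * (2 * b - M) * r0) * (1 - r0) ^ 3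
                 = M * (1 - \<alpha> + (1 + \<alpha>) * r0)"
    and hr1: "0 < r1" "r1 < 1"
    and hr1eq: "((1 - 1/2) * (1 + M) - 2 * (2 - 1/2) * (2 * b - M) * r1) * (1 - r1) ^ 3
                 = M * (1 - 1/2 + (1 + 1/2) * r1)"
  defines "f0 \<equiv> (\<lambda>z::complex. z - 2 * of_real b * z ^ 2 - of_real M * z ^ 3 / (1 - z))"
  shows "(\<forall>f\<in>class_F b M. \<forall>z. norm z \<le> r0 \<longrightarrow>
            deriv f z \<noteq> 0 \<and> norm (z * deriv (deriv f) z / deriv f z) \<le> 1 - \<alpha>)
       \<and> radius_convexity_order (class_F b M) \<alpha> = r0
       \<and> radius_uniform_convexity (class_F b M) = r1
       \<and> f0 \<in> class_F b M
       \<and> norm (of_real r0 * deriv (deriv f0) (of_real r0) / deriv f0 (of_real r0)) = 1 - \<alpha>"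
proof -
  interpret order: convexity_radius b M \<alpha> r0
    using hb hM h\<alpha> hr0 hr0eq by unfold_locales
  interpret uniform: convexity_radius b M "1/2" r1
    using hb hM hr1 hr1eq by unfold_locales auto
  have f0: "f0 = extremal_fun b M"
    by (simp add: f0_def extremal_fun_def fun_eq_iff)
  have "radius_convexity_order (class_F b M) \<alpha> = r0"
    unfolding radius_convexity_order_def
  proof (rule order.radius_class_F[where P = "\<lambda>w. \<alpha> < Re (1 + w)"])
    show "\<alpha> < Re (1 + w)" if "norm w < 1 - \<alpha>" for w
      using Re_one_plus_ge[of w] that by linarith
  qed simp
  moreover have "radius_uniform_convexity (class_F b M) = r1"
    unfolding radius_uniform_convexity_def
  proof (rule uniform.radius_class_F[where P = "\<lambda>w. norm w < Re (1 + w)"])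
    show "norm w < Re (1 + w)" if "norm w < 1 - 1/2" for w
      using Re_one_plus_ge[of w] that by linarith
  qed simp
  ultimately show ?thesis
    using order.class_F_ratio_bound(1,2) extremal_fun_in_class_F[OF hb(1) hM]
      order.extremal_fun_ratio_at_root
    by (simp add: f0)
qed

end
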